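(* Let $P$ be a binary matrix that contains none of $Q_1,Q_2,Q_3,Q_4$ as an interval minor. Then (1) $P$ avoids $D_2$, or (2) $P$ avoids $\overline{D}_2$, or (3) $P$ can be covered by three lines.
   Context: Rows are numbered top to bottom, columns left to right; $(i,j)$ is the entry in row $i$, column $j$; $\mathrm{supp}$ is the set of 1-entries; $(a,b]=\{a+1,\dots,b\}$. A pattern $P\in\{0,1\}^{k\times\ell}$ is an interval minor of $M\in\{0,1\}^{m\times n}$ if there are integers $0=r_0<\dots<r_k=m$ and $0=c_0<\dots<c_\ell=n$ such that for each 1-entry $(i,j)$ of $P$ the submatrix of $M$ on rows $(r_{i-1},r_i]$ and columns $(c_{j-1},c_j]$ contains a 1-entry; otherwise $M$ avoids $P$. $Q_1,\dots,Q_4\in\{0,1\}^{3\times3}$ have supports $\{(1,2),(2,1),(3,3)\}$, $\{(1,2),(2,3),(3,1)\}$, $\{(1,1),(2,3),(3,2)\}$, $\{(1,3),(2,1),(3,2)\}$. $D_2\in\{0,1\}^{2\times 2}$ has support $\{(1,1),(2,2)\}$ and $\overline D_2$ has support $\{(1,2),(2,1)\}$. A line is a row or a column; $M$ can be covered by $t$ lines if there are $t$ lines such that every 1-entry of $M$ lies on one of them. *)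

theory Defs
  imports Main
begin

(* A binary m x n matrix is represented by its dimensions together with its
   support (set of 1-entries), a subset of {1..m} x {1..n}.  Rows/columns are
   1-indexed as in the paper. *)
record bmatrix =
  nrows :: nat
  ncols :: nat
  supp  :: "(nat \<times> nat) set"

definition wf_bmatrix :: "bmatrix \<Rightarrow> bool" where
  "wf_bmatrix M \<longleftrightarrow> supp M \<subseteq> {1..nrows M} \<times> {1..ncols M}"

definition interval_minor :: "bmatrix \<Rightarrow> bmatrix \<Rightarrow> bool" where
  "interval_minor P M \<longleftrightarrow>
     (\<exists>r c :: nat \<Rightarrow> nat.
        r 0 = 0 \<and> r (nrows P) = nrows M \<and> (\<forall>i < nrows P. r i < r (Suc i)) \<and>
        c 0 = 0 \<and> c (ncols P) = ncols M \<and> (\<forall>j < ncols P. c j < c (Suc j)) \<and>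
        (\<forall>(i, j) \<in> supp P. \<exists>(a, b) \<in> supp M.
            a \<in> {r (i - 1)<..r i} \<and> b \<in> {c (j - 1)<..c j}))"

definition avoids :: "bmatrix \<Rightarrow> bmatrix \<Rightarrow> bool" where
  "avoids M P \<longleftrightarrow> \<not> interval_minor P M"

definition Q1 :: bmatrix where "Q1 = \<lparr>nrows = 3, ncols = 3, supp = {(1,2),(2,1),(3,3)}\<rparr>"
definition Q2 :: bmatrix where "Q2 = \<lparr>nrows = 3, ncols = 3, supp = {(1,2),(2,3),(3,1)}\<rparr>"
definition Q3 :: bmatrix where "Q3 = \<lparr>nrows = 3, ncols = 3, supp = {(1,1),(2,3),(3,2)}\<rparr>"
definition Q4 :: bmatrix where "Q4 = \<lparr>nrows = 3, ncols = 3, supp = {(1,3),(2,1),(3,2)}\<rparr>"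
definition D2 :: bmatrix where "D2 = \<lparr>nrows = 2, ncols = 2, supp = {(1,1),(2,2)}\<rparr>"
definition D2bar :: bmatrix where "D2bar = \<lparr>nrows = 2, ncols = 2, supp = {(1,2),(2,1)}\<rparr>"

definition is_line :: "bmatrix \<Rightarrow> nat + nat \<Rightarrow> bool" where
  "is_line M l \<longleftrightarrow> (case l of Inl i \<Rightarrow> 1 \<le> i \<and> i \<le> nrows M
                                | Inr j \<Rightarrow> 1 \<le> j \<and> j \<le> ncols M)"

definition on_line :: "nat \<times> nat \<Rightarrow> nat + nat \<Rightarrow> bool" where
  "on_line p l \<longleftrightarrow> (case l of Inl i \<Rightarrow> fst p = i | Inr j \<Rightarrow> snd p = j)"

(* M can be covered by t lines: there are t lines (a set of at most t lines; lines may
   be repeated in the informal notion, so "at most t" is equivalent when enough lines exist,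
   and trivially needed otherwise) such that every 1-entry lies on one of them. *)
definition coverable_by :: "bmatrix \<Rightarrow> nat \<Rightarrow> bool" where
  "coverable_by M t \<longleftrightarrow>
     (\<exists>L. finite L \<and> card L \<le> t \<and> (\<forall>l \<in> L. is_line M l) \<and>
          (\<forall>p \<in> supp M. \<exists>l \<in> L. on_line p l))"

end

theory Submission
  imports Defs
begin

text \<open>
  Avoiding Q1, ..., Q4 says exactly that any three 1-entries in pairwise distinct rows and columns
  form a monotone sequence. Hence in a set M of four 1-entries in distinct rows and columns all pairs
  have the same type (increasing or decreasing), and every 1-entry q has that type with each of the
  at least two points of M off its lines. If P contains both D2 and its mirror image, there is a pair
  q1, q2 in distinct rows and columns of the other type; then the points of M off the lines of q1 and
  those off the lines of q2 are disjoint, which pins q1 and q2 to crossings of lines through M and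
  forces them to have the type of M after all. So no four 1-entries lie in distinct rows and columns,
  and Koenig's theorem, a consequence of Hall's, covers the 1-entries by three lines.
\<close>

section \<open>Hall's and Koenig's theorems\<close>

lemma inj_on_if_disjoint_ranges:
  assumes "inj_on f J" "f ` J \<subseteq> X" "inj_on g (I - J)" "g ` (I - J) \<inter> X = {}"
  shows "inj_on (\<lambda>i. if i \<in> J then f i else g i) I"
proof (rule inj_onI)
  fix x y assume xy: "x \<in> I" "y \<in> I" "(if x \<in> J then f x else g x) = (if y \<in> J then f y else g y)"
  have "f a \<noteq> g b" "g b \<noteq> f a" if "a \<in> J" "b \<in> I - J" for a b
    using assms(2,4) that by blast+
  then show "x = y"
    using xy assms(1,3) unfolding inj_on_def by (auto split: if_splits)
qed

lemma Hall_condition_Diff_critical: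
  assumes "finite I" "\<forall>i\<in>I. finite (A i)" "\<forall>K\<subseteq>I. card K \<le> card (\<Union>(A ` K))"
    and "J \<subseteq> I" "card (\<Union>(A ` J)) = card J"
  shows "\<forall>K\<subseteq>I - J. card K \<le> card (\<Union>i\<in>K. A i - \<Union>(A ` J))"
proof (intro allI impI)
  fix K assume K: "K \<subseteq> I - J"
  have fin: "finite K" "finite J" using K assms(1,4) finite_subset by blast+
  have KJ: "K \<union> J \<subseteq> I" using K assms(4) by blast
  have "card K + card J = card (K \<union> J)"
    using K fin by (subst card_Un_disjoint) auto
  also have "\<dots> \<le> card (\<Union>(A ` (K \<union> J)))"
    using assms(3) KJ by blast
  also have "\<dots> = card ((\<Union>i\<in>K. A i - \<Union>(A ` J)) \<union> \<Union>(A ` J))"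
    by (rule arg_cong[where f = card]) auto
  also have "\<dots> = card (\<Union>i\<in>K. A i - \<Union>(A ` J)) + card J"
    using fin K assms(2,4,5) by (subst card_Un_disjoint) auto
  finally show "card K \<le> card (\<Union>i\<in>K. A i - \<Union>(A ` J))" by linarith
qed

lemma Hall_condition_Diff_surplus:
  assumes "finite I" "\<forall>i\<in>I. finite (A i)" "i0 \<in> I"
    and "\<forall>K. K \<noteq> {} \<longrightarrow> K \<subset> I \<longrightarrow> card K < card (\<Union>(A ` K))"
  shows "\<forall>K\<subseteq>I - {i0}. card K \<le> card (\<Union>i\<in>K. A i - {x})"
proof (intro allI impI)
  fix K assume K: "K \<subseteq> I - {i0}"
  show "card K \<le> card (\<Union>i\<in>K. A i - {x})"
  proof (cases "K = {}")
    case False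
    then have lt: "card K < card (\<Union>(A ` K))" using assms(3,4) K by blast
    have "finite (\<Union>(A ` K))"
      using K assms(1,2) by (intro finite_UN_I) (auto intro: finite_subset)
    then have le: "card (\<Union>(A ` K)) \<le> card (\<Union>(A ` K) - {x}) + 1"
      by (cases "x \<in> \<Union>(A ` K)") (auto simp: card_Diff_singleton)
    have eq: "(\<Union>i\<in>K. A i - {x}) = \<Union>(A ` K) - {x}" by auto
    show ?thesis unfolding eq using lt le by linarith
  qed simp
qed

theorem Hall_marriage:
  assumes "finite I" "\<forall>i\<in>I. finite (A i)" "\<forall>J\<subseteq>I. card J \<le> card (\<Union>(A ` J))"
  shows "\<exists>f. inj_on f I \<and> (\<forall>i\<in>I. f i \<in> A i)"
  using assms
proof (induction "card I" arbitrary: I A rule: less_induct)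
  case less
  show ?case
  proof (cases "\<exists>J. J \<noteq> {} \<and> J \<subset> I \<and> card (\<Union>(A ` J)) = card J")
    case True
    then obtain J where J: "J \<noteq> {}" "J \<subset> I" "card (\<Union>(A ` J)) = card J" by blast
    have finJ: "finite J" using J(2) less.prems(1) finite_subset by blast
    have "card J < card I" using less.prems(1) J(2) by (rule psubset_card_mono)
    then obtain f where f: "inj_on f J" "\<forall>i\<in>J. f i \<in> A i"
      using less.hyps[of J A] J(2) finJ less.prems by auto
    let ?B = "\<lambda>i. A i - \<Union>(A ` J)"
    have "I - J \<subset> I" using J(1,2) by blast
    then have "card (I - J) < card I" by (rule psubset_card_mono[OF less.prems(1)])
    moreover have "\<forall>K\<subseteq>I - J. card K \<le> card (\<Union>(?B ` K))"
      using Hall_condition_Diff_critical[OF less.prems] J(2,3) by auto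
    ultimately obtain g where g: "inj_on g (I - J)" "\<forall>i\<in>I - J. g i \<in> ?B i"
      using less.hyps[of "I - J" ?B] less.prems(1,2) by auto
    have "inj_on (\<lambda>i. if i \<in> J then f i else g i) I"
      by (rule inj_on_if_disjoint_ranges[where X = "\<Union>(A ` J)", OF f(1) _ g(1)]) (use f(2) g(2) in auto)
    then show ?thesis using f(2) g(2) by (intro exI[of _ "\<lambda>i. if i \<in> J then f i else g i"]) auto
  next
    case False
    then have surplus: "\<forall>K. K \<noteq> {} \<longrightarrow> K \<subset> I \<longrightarrow> card K < card (\<Union>(A ` K))"
      using less.prems(3) by (metis le_neq_implies_less psubset_imp_subset)
    show ?thesis
    proof (cases "I = {}")
      case False
      then obtain i0 where i0: "i0 \<in> I" by auto
      have "card {i0} \<le> card (\<Union>(A ` {i0}))" using less.prems(3) i0 by blast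
      then obtain x where x: "x \<in> A i0" by fastforce
      let ?B = "\<lambda>i. A i - {x}"
      obtain g where g: "inj_on g (I - {i0})" "\<forall>i\<in>I - {i0}. g i \<in> ?B i"
        using less.hyps[of "I - {i0}" ?B] less.prems(1,2) card_Diff1_less[OF less.prems(1) i0]
          Hall_condition_Diff_surplus[OF less.prems(1,2) i0 surplus] by auto
      have "inj_on (\<lambda>i. if i \<in> {i0} then x else g i) I"
        by (rule inj_on_if_disjoint_ranges[where X = "{x}", OF _ _ g(1)]) (use g(2) in auto)
      then show ?thesis using x g(2)
        by (intro exI[of _ "\<lambda>i. if i \<in> {i0} then x else g i"]) auto
    qed simp
  qed
qed

lemma Hall_deficiency:
  fixes A :: "'i \<Rightarrow> 'a set"
  assumes "finite I" "\<forall>i\<in>I. finite (A i)" "\<forall>J\<subseteq>I. card J \<le> card (\<Union>(A ` J)) + d"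
  shows "\<exists>I' f. I' \<subseteq> I \<and> card I \<le> card I' + d \<and> inj_on f I' \<and> (\<forall>i\<in>I'. f i \<in> A i)"
proof -
  define B where "B i = Inl ` A i \<union> Inr ` {..<d}" for i
  have "\<forall>J\<subseteq>I. card J \<le> card (\<Union>(B ` J))"
  proof (intro allI impI)
    fix J assume J: "J \<subseteq> I"
    show "card J \<le> card (\<Union>(B ` J))"
    proof (cases "J = {}")
      case False
      then have eq: "\<Union>(B ` J) = Inl ` \<Union>(A ` J) \<union> Inr ` {..<d}" unfolding B_def by auto
      have "finite (\<Union>(A ` J))"
        using J assms(1,2) by (intro finite_UN_I) (auto intro: finite_subset)
      then have "card (\<Union>(B ` J)) = card (\<Union>(A ` J)) + d"
        unfolding eq by (subst card_Un_disjoint) (auto simp: card_image)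
      then show ?thesis using assms(3) J by simp
    qed simp
  qed
  moreover have "\<forall>i\<in>I. finite (B i)" using assms(2) unfolding B_def by simp
  ultimately obtain g where g: "inj_on g I" "\<forall>i\<in>I. g i \<in> B i"
    using Hall_marriage[OF assms(1)] by blast
  define I' where "I' = {i \<in> I. isl (g i)}"
  have "inj_on g (I - I')" using g(1) by (rule inj_on_subset) auto
  then have "card (I - I') = card (g ` (I - I'))" by (simp add: card_image)
  also have "\<dots> \<le> card (Inr ` {..<d} :: ('a + nat) set)"
    using g(2) unfolding I'_def B_def by (intro card_mono) auto
  also have "\<dots> = d" by (simp add: card_image)
  finally have "card I \<le> card I' + d"
    using assms(1) card_Diff_subset[of I' I] card_mono[of I I'] unfolding I'_def by auto
  moreover have "inj_on (projl \<circ> g) I'"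
  proof (rule inj_onI)
    fix i j assume ij: "i \<in> I'" "j \<in> I'" "(projl \<circ> g) i = (projl \<circ> g) j"
    then have "g i = g j" unfolding I'_def by (metis comp_apply mem_Collect_eq sum.collapse(1))
    then show "i = j" using g(1) ij(1,2) unfolding I'_def inj_on_def by blast
  qed
  moreover have "\<forall>i\<in>I'. (projl \<circ> g) i \<in> A i"
    using g(2) unfolding I'_def B_def by auto
  moreover have "I' \<subseteq> I" unfolding I'_def by blast
  ultimately show ?thesis by blast
qed

theorem Koenig_cover:
  fixes S :: "('a \<times> 'b) set"
  assumes "finite S" and matching_le: "\<And>M. M \<subseteq> S \<Longrightarrow> inj_on fst M \<Longrightarrow> inj_on snd M \<Longrightarrow> card M \<le> k"
  shows "\<exists>R C. R \<subseteq> fst ` S \<and> C \<subseteq> snd ` S \<and> card R + card C \<le> k \<and> (\<forall>p\<in>S. fst p \<in> R \<or> snd p \<in> C)"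
proof (cases "card (fst ` S) \<le> k")
  case True
  then show ?thesis by (intro exI[of _ "fst ` S"] exI[of _ "{}"]) auto
next
  case False
  define I where "I = fst ` S"
  define A where "A i = {b. (i, b) \<in> S}" for i
  define d where "d = card I - Suc k"
  \<comment> \<open>Hall's condition with deficiency \<open>d\<close> would give a matching of size \<open>k + 1\<close>; a set \<open>J\<close>
     violating it yields the cover by the rows \<open>I - J\<close> and the columns adjacent to \<open>J\<close>.\<close>
  have finI: "finite I" using assms(1) unfolding I_def by simp
  have A_sub: "A i \<subseteq> snd ` S" for i unfolding A_def by force
  have finA: "\<forall>i\<in>I. finite (A i)" using finite_subset[OF A_sub] assms(1) by simp
  have "\<not> (\<forall>J\<subseteq>I. card J \<le> card (\<Union>(A ` J)) + d)"
  proof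
    assume "\<forall>J\<subseteq>I. card J \<le> card (\<Union>(A ` J)) + d"
    from Hall_deficiency[OF finI finA this]
    obtain I' f where I': "I' \<subseteq> I" "card I \<le> card I' + d" "inj_on f I'" "\<forall>i\<in>I'. f i \<in> A i"
      by blast
    define M where "M = (\<lambda>i. (i, f i)) ` I'"
    have "M \<subseteq> S" "inj_on fst M" "inj_on snd M"
      using I'(3,4) unfolding M_def A_def inj_on_def by auto
    then have "card M \<le> k" by (rule matching_le)
    moreover have "card M = card I'" unfolding M_def by (rule card_image) (simp add: inj_on_def)
    ultimately show False using I'(2) False unfolding d_def I_def by linarith
  qed
  then obtain J where J: "J \<subseteq> I" "card (\<Union>(A ` J)) + d < card J" by (meson not_le)
  have "card (I - J) + card (\<Union>(A ` J)) \<le> k"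
    using J finI False card_Diff_subset[of J I] card_mono[of I J] finite_subset[of J I]
    unfolding d_def I_def by linarith
  moreover have "I - J \<subseteq> fst ` S" "\<Union>(A ` J) \<subseteq> snd ` S" using A_sub unfolding I_def by blast+
  moreover have "\<forall>p\<in>S. fst p \<in> I - J \<or> snd p \<in> \<Union>(A ` J)" unfolding I_def A_def by force
  ultimately show ?thesis by blast
qed

section \<open>Entries in distinct rows and columns\<close>

definition share_line :: "'a \<times> 'b \<Rightarrow> 'a \<times> 'b \<Rightarrow> bool" where
  "share_line p q \<longleftrightarrow> fst p = fst q \<or> snd p = snd q"

definition concordant :: "'a::linorder \<times> 'b::linorder \<Rightarrow> 'a \<times> 'b \<Rightarrow> bool" where
  "concordant p q \<longleftrightarrow> (fst p < fst q \<longleftrightarrow> snd p < snd q)"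

definition monotone_triples :: "('a::linorder \<times> 'b::linorder) set \<Rightarrow> bool" where
  "monotone_triples S \<longleftrightarrow> (\<forall>x\<in>S. \<forall>y\<in>S. \<forall>z\<in>S. fst x < fst y \<longrightarrow> fst y < fst z \<longrightarrow>
     snd x \<noteq> snd y \<longrightarrow> snd y \<noteq> snd z \<longrightarrow> snd x \<noteq> snd z \<longrightarrow>
     (snd x < snd y \<and> snd y < snd z) \<or> (snd y < snd x \<and> snd z < snd y))"

lemma share_line_sym: "share_line p q = share_line q p"
  unfolding share_line_def by auto

lemma concordant_sym: "\<not> share_line p q \<Longrightarrow> concordant p q = concordant q p"
  unfolding share_line_def concordant_def by (auto simp: linorder_neq_iff)

lemma not_share_line_if_matching:
  "inj_on fst M \<Longrightarrow> inj_on snd M \<Longrightarrow> x \<in> M \<Longrightarrow> y \<in> M \<Longrightarrow> x \<noteq> y \<Longrightarrow> \<not> share_line x y"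
  unfolding share_line_def inj_on_def by blast

lemma monotone_triples_concordant:
  assumes "monotone_triples S" "x \<in> S" "y \<in> S" "z \<in> S"
    and "\<not> share_line x y" "\<not> share_line x z" "\<not> share_line y z"
  shows "concordant x y = concordant x z"
proof -
  have mono: "(snd a < snd b \<and> snd b < snd c) \<or> (snd b < snd a \<and> snd c < snd b)"
    if "a \<in> {x, y, z}" "b \<in> {x, y, z}" "c \<in> {x, y, z}" "fst a < fst b" "fst b < fst c"
      "snd a \<noteq> snd b" "snd b \<noteq> snd c" "snd a \<noteq> snd c" for a b c
    using assms(1-4) that unfolding monotone_triples_def by blast
  show ?thesis
    using mono[of x y z] mono[of x z y] mono[of y x z] mono[of y z x] mono[of z x y] mono[of z y x]
      assms(5-7) unfolding share_line_def concordant_def by (auto simp: linorder_neq_iff)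
qed

lemma matching_concordance_uniform:
  assumes "monotone_triples S" "M \<subseteq> S" "inj_on fst M" "inj_on snd M"
  shows "\<exists>c. \<forall>x\<in>M. \<forall>y\<in>M. x \<noteq> y \<longrightarrow> concordant x y = c"
proof -
  have indep: "\<not> share_line x y" if "x \<in> M" "y \<in> M" "x \<noteq> y" for x y
    using not_share_line_if_matching[OF assms(3,4) that] .
  have from_same: "concordant x y = concordant x z"
    if "x \<in> M" "y \<in> M" "z \<in> M" "x \<noteq> y" "x \<noteq> z" for x y z
  proof (cases "y = z")
    case False
    with that show ?thesis
      using assms(2) indep by (intro monotone_triples_concordant[OF assms(1)]) auto
  qed simp
  have pairwise: "concordant x y = concordant u v"
    if "x \<in> M" "y \<in> M" "u \<in> M" "v \<in> M" "x \<noteq> y" "u \<noteq> v" for x y u v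
  proof (cases "x = u")
    case False
    then have "concordant x y = concordant u x"
      using from_same[of x y u] concordant_sym[OF indep[of x u]] that by simp
    also have "\<dots> = concordant u v" using from_same[of u x v] False that by simp
    finally show ?thesis .
  qed (use from_same[of u y v] that in simp)
  show ?thesis
  proof (cases "\<exists>x\<in>M. \<exists>y\<in>M. x \<noteq> y")
    case True
    then obtain u v where "u \<in> M" "v \<in> M" "u \<noteq> v" by blast
    then show ?thesis using pairwise by (intro exI[of _ "concordant u v"]) blast
  qed blast
qed

lemma card_fiber_le_1_if_inj_on:
  assumes "inj_on f M"
  shows "card {x \<in> M. f x = a} \<le> 1"
proof -
  have "inj_on f {x \<in> M. f x = a}" using assms by (rule inj_on_subset) auto
  then have "card {x \<in> M. f x = a} = card (f ` {x \<in> M. f x = a})" by (rule card_image[symmetric])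
  also have "\<dots> \<le> card {a}" by (rule card_mono) auto
  finally show ?thesis by simp
qed

lemma card_share_line_le_2:
  assumes "inj_on fst M" "inj_on snd M"
  shows "card {x \<in> M. share_line x q} \<le> 2"
proof -
  have eq: "{x \<in> M. share_line x q} = {x \<in> M. fst x = fst q} \<union> {x \<in> M. snd x = snd q}"
    unfolding share_line_def by auto
  show ?thesis
    unfolding eq using card_Un_le[of "{x \<in> M. fst x = fst q}" "{x \<in> M. snd x = snd q}"]
      card_fiber_le_1_if_inj_on[OF assms(1), of "fst q"] card_fiber_le_1_if_inj_on[OF assms(2), of "snd q"]
    by linarith
qed

lemma two_points_off_lines_if_card_matching_ge_4:
  assumes "inj_on fst M" "inj_on snd M" "4 \<le> card M"
  shows "\<exists>x y. x \<in> M \<and> y \<in> M \<and> x \<noteq> y \<and> \<not> share_line x q \<and> \<not> share_line y q"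
proof -
  let ?U = "{x \<in> M. \<not> share_line x q}"
  have "M = ?U \<union> {x \<in> M. share_line x q}" by auto
  then have "card M \<le> card ?U + card {x \<in> M. share_line x q}" by (metis card_Un_le)
  then have "\<not> card ?U \<le> Suc 0" using card_share_line_le_2[OF assms(1,2), of q] assms(3) by linarith
  moreover have "finite ?U" using assms(3) card_ge_0_finite by force
  ultimately show ?thesis using card_le_Suc0_iff_eq by blast
qed

lemma share_line_crossing:
  assumes "\<not> share_line a b" "share_line a q" "share_line b q"
  obtains y w where "y \<in> {a, b}" "w \<in> {a, b}" "fst q = fst y" "snd q = snd w"
proof -
  consider "fst q = fst a" "snd q = snd b" | "fst q = fst b" "snd q = snd a"
    using assms unfolding share_line_def by auto
  then show thesis
  proof cases
    case 1
    then show ?thesis by (intro that[of a b]) simp_all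
  next
    case 2
    then show ?thesis by (intro that[of b a]) simp_all
  qed
qed

lemma concordant_with_free_matching_point:
  assumes "monotone_triples S" "M \<subseteq> S" "\<forall>x\<in>M. \<forall>y\<in>M. x \<noteq> y \<longrightarrow> concordant x y = c"
    and "inj_on fst M" "inj_on snd M" "q \<in> S" "x \<in> M" "y \<in> M" "x \<noteq> y"
    and "\<not> share_line x q" "\<not> share_line y q"
  shows "concordant q x = c"
proof -
  have "\<not> share_line q y" using assms(11) by (simp add: share_line_sym)
  then have "concordant x q = concordant x y"
    using assms(2,6-8,10) not_share_line_if_matching[OF assms(4,5,7-9)]
    by (intro monotone_triples_concordant[OF assms(1)]) auto
  also have "\<dots> = c" using assms(3,7-9) by blast
  finally show ?thesis using concordant_sym[OF assms(10)] by simp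
qed

lemma concordant_cross:
  fixes w s t q1 q2 :: "'a::linorder \<times> 'b::linorder"
  assumes "\<not> share_line w s" "\<not> share_line w t"
    and "concordant w s = c" "concordant q1 s = c" "concordant q2 w = c"
    and "snd q1 = snd w" "fst q2 = fst s" "snd q2 = snd t"
  shows "concordant q1 q2 = c"
proof -
  have "fst w < fst s \<longleftrightarrow> \<not> fst s < fst w" "snd w < snd t \<longleftrightarrow> \<not> snd t < snd w"
    using assms(1,2) unfolding share_line_def by (auto simp: linorder_neq_iff)
  then show ?thesis using assms(3-5) unfolding concordant_def assms(6-8) by argo
qed

lemma concordant_if_card_matching_ge_4:
  assumes mono: "monotone_triples S"
    and M: "M \<subseteq> S" "inj_on fst M" "inj_on snd M" "4 \<le> card M"
    and uniform: "\<forall>x\<in>M. \<forall>y\<in>M. x \<noteq> y \<longrightarrow> concordant x y = c"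
    and q: "q1 \<in> S" "q2 \<in> S" "\<not> share_line q1 q2"
  shows "concordant q1 q2 = c"
proof (rule ccontr)
  assume discordant: "concordant q1 q2 \<noteq> c"
  define U where "U q = {x \<in> M. \<not> share_line x q}" for q
  have free_pair: "\<exists>x y. x \<in> U q \<and> y \<in> U q \<and> x \<noteq> y" for q
    using two_points_off_lines_if_card_matching_ge_4[OF M(2-4), of q] unfolding U_def by blast
  have concordant_free: "concordant q x = c" if "q \<in> S" "x \<in> U q" for q x
  proof -
    obtain y where "y \<in> U q" "y \<noteq> x" using free_pair[of q] by blast
    then show ?thesis
      using concordant_with_free_matching_point[OF mono M(1) uniform M(2,3) that(1), of x y] that(2)
      unfolding U_def by simp
  qed
  have disjoint: "U q1 \<inter> U q2 = {}"
  proof (rule ccontr)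
    assume "U q1 \<inter> U q2 \<noteq> {}"
    then obtain x where x: "x \<in> U q1" "x \<in> U q2" by blast
    have "concordant q1 q2 = concordant q1 x"
      using x M(1) q(3) unfolding U_def
      by (intro monotone_triples_concordant[OF mono q(1,2)]) (auto simp: share_line_sym)
    then show False using concordant_free[OF q(1) x(1)] discordant by simp
  qed
  have cross: "\<exists>y w. y \<in> U q' \<and> w \<in> U q' \<and> fst q = fst y \<and> snd q = snd w"
    if "U q \<inter> U q' = {}" for q q'
  proof -
    obtain a b where ab: "a \<in> U q'" "b \<in> U q'" "a \<noteq> b" using free_pair by blast
    then have "\<not> share_line a b" "share_line a q" "share_line b q"
      using that not_share_line_if_matching[OF M(2,3)] unfolding U_def by auto
    then obtain y w where "y \<in> {a, b}" "w \<in> {a, b}" "fst q = fst y" "snd q = snd w"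
      by (rule share_line_crossing)
    then show ?thesis using ab by blast
  qed
  obtain w where w: "w \<in> U q2" "snd q1 = snd w"
    using cross[OF disjoint] by blast
  obtain s t where st: "s \<in> U q1" "t \<in> U q1" "fst q2 = fst s" "snd q2 = snd t"
    using cross[of q2 q1] disjoint by blast
  have "w \<noteq> s" "w \<noteq> t" using w(1) st(1,2) disjoint by blast+
  moreover have "w \<in> M" "s \<in> M" "t \<in> M" using w(1) st(1,2) unfolding U_def by simp_all
  ultimately have "\<not> share_line w s" "\<not> share_line w t" "concordant w s = c"
    using uniform not_share_line_if_matching[OF M(2,3)] by simp_all
  moreover have "concordant q1 s = c" "concordant q2 w = c"
    using concordant_free q w(1) st(1) by auto
  ultimately have "concordant q1 q2 = c"
    using w(2) st(3,4) by (rule concordant_cross)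
  with discordant show False ..
qed

lemma card_matching_le_3:
  assumes mono: "monotone_triples S"
    and p: "p1 \<in> S" "p2 \<in> S" "\<not> share_line p1 p2" "concordant p1 p2"
    and q: "q1 \<in> S" "q2 \<in> S" "\<not> share_line q1 q2" "\<not> concordant q1 q2"
    and M: "M \<subseteq> S" "inj_on fst M" "inj_on snd M"
  shows "card M \<le> 3"
proof (rule ccontr)
  assume "\<not> card M \<le> 3"
  then have "4 \<le> card M" by simp
  obtain c where c: "\<forall>x\<in>M. \<forall>y\<in>M. x \<noteq> y \<longrightarrow> concordant x y = c"
    using matching_concordance_uniform[OF mono M] by blast
  have "concordant p1 p2 = c" "concordant q1 q2 = c"
    by (rule concordant_if_card_matching_ge_4[OF mono M \<open>4 \<le> card M\<close> c p(1-3)],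
        rule concordant_if_card_matching_ge_4[OF mono M \<open>4 \<le> card M\<close> c q(1-3)])
  with p(4) q(4) show False by simp
qed

section \<open>Interval minors and line covers\<close>

lemma interval_partition_if_strict_mono_on:
  fixes u :: "nat \<Rightarrow> nat"
  assumes "0 < k" "strict_mono_on {1..k} u" "u ` {1..k} \<subseteq> {1..n}"
  shows "\<exists>r. r 0 = 0 \<and> r k = n \<and> (\<forall>i<k. r i < r (Suc i)) \<and> (\<forall>i\<in>{1..k}. u i \<in> {r (i - 1)<..r i})"
proof -
  define r where "r i = (if i = 0 then 0 else if i = k then n else u i)" for i
  have mono: "u i < u j" if "1 \<le> i" "i < j" "j \<le> k" for i j
    using strict_mono_onD[OF assms(2)] that by simp
  have bounds: "1 \<le> u i" "u i \<le> n" if "1 \<le> i" "i \<le> k" for i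
    using assms(3) that by (simp_all add: image_subset_iff)
  have "r i < r (Suc i)" if "i < k" for i
    using that mono[of i "Suc i"] mono[of i k] bounds[of "Suc i"] bounds[of k]
    unfolding r_def by auto
  moreover have "u i \<in> {r (i - 1)<..r i}" if "i \<in> {1..k}" for i
    using that mono[of "i - 1" i] bounds[of i] unfolding r_def by auto
  moreover have "r 0 = 0" "r k = n" using assms(1) unfolding r_def by simp_all
  ultimately show ?thesis by blast
qed

lemma interval_minor_if_submatrix:
  assumes "wf_bmatrix Q" "0 < nrows Q" "0 < ncols Q"
    and "strict_mono_on {1..nrows Q} u" "u ` {1..nrows Q} \<subseteq> {1..nrows P}"
    and "strict_mono_on {1..ncols Q} v" "v ` {1..ncols Q} \<subseteq> {1..ncols P}"
    and "\<And>i j. (i, j) \<in> supp Q \<Longrightarrow> (u i, v j) \<in> supp P"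
  shows "interval_minor Q P"
proof -
  obtain r where r: "r 0 = 0" "r (nrows Q) = nrows P" "\<forall>i<nrows Q. r i < r (Suc i)"
    "\<forall>i\<in>{1..nrows Q}. u i \<in> {r (i - 1)<..r i}"
    using interval_partition_if_strict_mono_on[OF assms(2,4,5)] by blast
  obtain c where c: "c 0 = 0" "c (ncols Q) = ncols P" "\<forall>j<ncols Q. c j < c (Suc j)"
    "\<forall>j\<in>{1..ncols Q}. v j \<in> {c (j - 1)<..c j}"
    using interval_partition_if_strict_mono_on[OF assms(3,6,7)] by blast
  have "\<forall>(i, j) \<in> supp Q. \<exists>(a, b) \<in> supp P. a \<in> {r (i - 1)<..r i} \<and> b \<in> {c (j - 1)<..c j}"
  proof (clarify)
    fix i j assume ij: "(i, j) \<in> supp Q"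
    then have "i \<in> {1..nrows Q}" "j \<in> {1..ncols Q}" using assms(1) unfolding wf_bmatrix_def by auto
    then show "\<exists>(a, b) \<in> supp P. a \<in> {r (i - 1)<..r i} \<and> b \<in> {c (j - 1)<..c j}"
      using assms(8)[OF ij] r(4) c(4) by blast
  qed
  then show ?thesis unfolding interval_minor_def using r(1-3) c(1-3) by blast
qed

definition seq3 :: "'a \<Rightarrow> 'a \<Rightarrow> 'a \<Rightarrow> nat \<Rightarrow> 'a" where
  "seq3 a b c i = (if i = 1 then a else if i = 2 then b else c)"

lemma strict_mono_on_seq3:
  fixes a b c :: "'a::order"
  assumes "a < b" "b < c"
  shows "strict_mono_on {1..3} (seq3 a b c)"
  using assms unfolding strict_mono_on_def seq3_def
  by (auto simp: numeral_3_eq_3 le_Suc_eq intro: order.strict_trans)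

lemma interval_minor_if_3x3_submatrix:
  assumes "wf_bmatrix Q" "nrows Q = 3" "ncols Q = 3"
    and "a1 < a2" "a2 < a3" "{a1, a2, a3} \<subseteq> {1..nrows P}"
    and "b1 < b2" "b2 < b3" "{b1, b2, b3} \<subseteq> {1..ncols P}"
    and "\<And>i j. (i, j) \<in> supp Q \<Longrightarrow> (seq3 a1 a2 a3 i, seq3 b1 b2 b3 j) \<in> supp P"
  shows "interval_minor Q P"
proof (rule interval_minor_if_submatrix)
  show "strict_mono_on {1..nrows Q} (seq3 a1 a2 a3)" "strict_mono_on {1..ncols Q} (seq3 b1 b2 b3)"
    unfolding assms(2,3) by (rule strict_mono_on_seq3[OF assms(4,5)], rule strict_mono_on_seq3[OF assms(7,8)])
  show "seq3 a1 a2 a3 ` {1..nrows Q} \<subseteq> {1..nrows P}" "seq3 b1 b2 b3 ` {1..ncols Q} \<subseteq> {1..ncols P}"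
    using assms(6,9) unfolding assms(2,3) seq3_def by auto
qed (use assms in simp_all)

lemma monotone_triples_if_avoids_Q:
  assumes wf: "wf_bmatrix P"
    and avoids: "avoids P Q1" "avoids P Q2" "avoids P Q3" "avoids P Q4"
  shows "monotone_triples (supp P)"
  unfolding monotone_triples_def
proof (intro ballI impI)
  fix x y z assume xyz: "x \<in> supp P" "y \<in> supp P" "z \<in> supp P"
    and rows: "fst x < fst y" "fst y < fst z"
    and cols: "snd x \<noteq> snd y" "snd y \<noteq> snd z" "snd x \<noteq> snd z"
  have ranges: "{fst x, fst y, fst z} \<subseteq> {1..nrows P}" "{snd x, snd y, snd z} \<subseteq> {1..ncols P}"
    using wf xyz unfolding wf_bmatrix_def by auto
  have wf_Q: "wf_bmatrix Q1" "wf_bmatrix Q2" "wf_bmatrix Q3" "wf_bmatrix Q4"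
    unfolding wf_bmatrix_def Q1_def Q2_def Q3_def Q4_def by auto
  note minor = interval_minor_if_3x3_submatrix[OF _ _ _ rows ranges(1)]
  show "(snd x < snd y \<and> snd y < snd z) \<or> (snd y < snd x \<and> snd z < snd y)"
  proof (rule ccontr)
    assume "\<not> ?thesis"
    then consider "snd y < snd x" "snd x < snd z" | "snd z < snd x" "snd x < snd y"
      | "snd x < snd z" "snd z < snd y" | "snd y < snd z" "snd z < snd x"
      using cols by linarith
    then show False
    proof cases
      case 1
      have "interval_minor Q1 P"
        by (rule minor[OF wf_Q(1) _ _ 1]) (use ranges xyz in \<open>auto simp: Q1_def seq3_def\<close>)
      with avoids(1) show False unfolding avoids_def by blast
    next
      case 2
      have "interval_minor Q2 P"
        by (rule minor[OF wf_Q(2) _ _ 2]) (use ranges xyz in \<open>auto simp: Q2_def seq3_def\<close>)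
      with avoids(2) show False unfolding avoids_def by blast
    next
      case 3
      have "interval_minor Q3 P"
        by (rule minor[OF wf_Q(3) _ _ 3]) (use ranges xyz in \<open>auto simp: Q3_def seq3_def\<close>)
      with avoids(3) show False unfolding avoids_def by blast
    next
      case 4
      have "interval_minor Q4 P"
        by (rule minor[OF wf_Q(4) _ _ 4]) (use ranges xyz in \<open>auto simp: Q4_def seq3_def\<close>)
      with avoids(4) show False unfolding avoids_def by blast
    qed
  qed
qed

lemma coverable_by_rows_columns:
  assumes "R \<subseteq> {1..nrows P}" "C \<subseteq> {1..ncols P}" "card R + card C \<le> t"
    and "\<forall>p\<in>supp P. fst p \<in> R \<or> snd p \<in> C"
  shows "coverable_by P t"
proof -
  define L where "L = Inl ` R \<union> Inr ` C"
  have "finite R" "finite C" using assms(1,2) finite_subset by blast+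
  then have "finite L" unfolding L_def by simp
  moreover have "card L \<le> card R + card C"
    unfolding L_def using card_Un_le[of "Inl ` R" "Inr ` C"] by (simp add: card_image)
  moreover have "\<forall>l\<in>L. is_line P l" using assms(1,2) unfolding L_def is_line_def by auto
  moreover have "\<forall>p\<in>supp P. \<exists>l\<in>L. on_line p l"
  proof
    fix p assume "p \<in> supp P"
    then have "Inl (fst p) \<in> L \<or> Inr (snd p) \<in> L" using assms(4) unfolding L_def by blast
    then show "\<exists>l\<in>L. on_line p l" unfolding on_line_def by force
  qed
  ultimately show ?thesis unfolding coverable_by_def using assms(3) by (meson le_trans)
qed

lemma concordant_pair_if_contains_D2:
  assumes "\<not> avoids P D2"
  obtains p q where "p \<in> supp P" "q \<in> supp P" "fst p < fst q" "snd p < snd q"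
proof -
  obtain r c where rc: "\<forall>(i, j) \<in> supp D2. \<exists>(a, b) \<in> supp P. a \<in> {r (i - 1)<..r i} \<and> b \<in> {c (j - 1)<..c j}"
    using assms unfolding avoids_def interval_minor_def by blast
  then obtain a b a' b' where "(a, b) \<in> supp P" "(a', b') \<in> supp P"
    "a \<le> r 1" "r 1 < a'" "b \<le> c 1" "c 1 < b'"
    unfolding D2_def by fastforce
  then show ?thesis using that[of "(a, b)" "(a', b')"] by simp
qed

lemma discordant_pair_if_contains_D2bar:
  assumes "\<not> avoids P D2bar"
  obtains p q where "p \<in> supp P" "q \<in> supp P" "fst p < fst q" "snd q < snd p"
proof -
  obtain r c where rc: "\<forall>(i, j) \<in> supp D2bar. \<exists>(a, b) \<in> supp P. a \<in> {r (i - 1)<..r i} \<and> b \<in> {c (j - 1)<..c j}"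
    using assms unfolding avoids_def interval_minor_def by blast
  then obtain a b a' b' where "(a, b) \<in> supp P" "(a', b') \<in> supp P"
    "a \<le> r 1" "r 1 < a'" "b' \<le> c 1" "c 1 < b"
    unfolding D2bar_def by fastforce
  then show ?thesis using that[of "(a, b)" "(a', b')"] by simp
qed

lemma coverable_by_if_card_matching_le:
  assumes "wf_bmatrix P"
    and "\<And>M. M \<subseteq> supp P \<Longrightarrow> inj_on fst M \<Longrightarrow> inj_on snd M \<Longrightarrow> card M \<le> k"
  shows "coverable_by P k"
proof -
  have "finite (supp P)"
    using assms(1) unfolding wf_bmatrix_def by (rule finite_subset) simp
  then obtain R C where RC: "R \<subseteq> fst ` supp P" "C \<subseteq> snd ` supp P" "card R + card C \<le> k"
    "\<forall>p\<in>supp P. fst p \<in> R \<or> snd p \<in> C"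
    using Koenig_cover[of "supp P" k] assms(2) by blast
  have "fst ` supp P \<subseteq> {1..nrows P}" "snd ` supp P \<subseteq> {1..ncols P}"
    using assms(1) unfolding wf_bmatrix_def by auto
  then have "R \<subseteq> {1..nrows P}" "C \<subseteq> {1..ncols P}"
    using order_trans[OF RC(1)] order_trans[OF RC(2)] by simp_all
  then show ?thesis using RC(3,4) by (rule coverable_by_rows_columns)
qed

lemma coverable_by_3_if_contains_D2_and_D2bar:
  assumes "wf_bmatrix P" "monotone_triples (supp P)" "\<not> avoids P D2" "\<not> avoids P D2bar"
  shows "coverable_by P 3"
proof -
  obtain p1 p2 where p: "p1 \<in> supp P" "p2 \<in> supp P" "fst p1 < fst p2" "snd p1 < snd p2"
    using assms(3) by (rule concordant_pair_if_contains_D2)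
  obtain q1 q2 where q: "q1 \<in> supp P" "q2 \<in> supp P" "fst q1 < fst q2" "snd q2 < snd q1"
    using assms(4) by (rule discordant_pair_if_contains_D2bar)
  have "card M \<le> 3" if "M \<subseteq> supp P" "inj_on fst M" "inj_on snd M" for M
    by (rule card_matching_le_3[OF assms(2) p(1,2) _ _ q(1,2) _ _ that])
      (use p q in \<open>auto simp: share_line_def concordant_def\<close>)
  then show ?thesis by (rule coverable_by_if_card_matching_le[OF assms(1)])
qed

theorem proposition3p6:
  fixes P :: bmatrix
  assumes "wf_bmatrix P"
    and "avoids P Q1" and "avoids P Q2" and "avoids P Q3" and "avoids P Q4"
  shows "avoids P D2 \<or> avoids P D2bar \<or> coverable_by P 3"
  using coverable_by_3_if_contains_D2_and_D2bar[OF assms(1) monotone_triples_if_avoids_Q[OF assms]]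
  by blast

end
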